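(* Let $\mathcal{G}$ be a finite groupoid and let $\mathcal{H}$ and $\mathcal{K}$ be connected wide subgroupoids of $\mathcal{G}$. Then there exists an isomorphism of $\mathbb{C}$-vector spaces \[\mathbb{C}_{\mathcal{H}\backslash\mathcal{G}/\mathcal{K}}\cong \mathrm{Nat}(Y_\mathcal{H},Y_\mathcal{K}),\] where $\mathrm{Nat}(Y_\mathcal{H},Y_\mathcal{K})$ denotes the vector space of natural transformations $Y_\mathcal{H}\Rightarrow Y_\mathcal{K}$ between functors $\mathcal{G}\to\mathbf{Vect}_\mathbb{C}$.
   Context: A groupoid is a category in which every morphism is invertible; all groupoids are finite and nonempty; $\mathcal{C}_0,\mathcal{C}_1$ denote objects and morphisms, and $gg'$ denotes composition $g\circ g'$. A subgroupoid is a subcategory that is a groupoid; it is wide if it contains all objects, connected if any two of its objects are joined by a morphism of it. Define \[\mathbb{C}_{\mathcal{H}\backslash\mathcal{G}/\mathcal{K}}:=\{\phi:\mathcal{G}_1\to\mathbb{C}\mid \phi(h^{-1}gk)=\phi(g)\text{ for all }h\in\mathcal{H}_1,g\in\mathcal{G}_1,k\in\mathcal{K}_1\text{ with }\mathrm{cod}\,h=\mathrm{cod}\,g,\ \mathrm{dom}\,g=\mathrm{cod}\,k\},\] a vector space under pointwise operations. For an object $G$ let $\mathrm{Mor}_\mathcal{G}(-,G):=\coprod_{G'\in\mathcal{G}_0}\mathcal{G}(G',G)$. For a subgroupoid $\mathcal{H}$, the functor $Y_\mathcal{H}:\mathcal{G}\to\mathbf{Vect}_\mathbb{C}$ is given on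 objects by $Y_\mathcal{H}(G):=\{f:\mathrm{Mor}_\mathcal{G}(-,G)\to\mathbb{C}\mid f(gh)=f(g)\text{ for all } g\in\mathrm{Mor}_\mathcal{G}(-,G),\ h\in\mathcal{H}_1 \text{ with } \mathrm{dom}\,g=\mathrm{cod}\,h\}$ (pointwise vector space structure), and on a morphism $g:G\to G'$ by $Y_\mathcal{H}(g)(f):=f(g^{-1}\,-)$, i.e. $x\mapsto f(g^{-1}x)$ for $x\in\mathrm{Mor}_\mathcal{G}(-,G')$. *)

theory Defs
  imports Complex_Main
begin

text \<open>A (small) category presented concretely: a set of objects, a set of morphisms,
  domain, codomain, composition (gcomp g g' is g \<circ> g', defined when gdom g = gcod g')
  and identities.\<close>
record ('o, 'm) groupoid =
  gobj :: "'o set"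
  gmor :: "'m set"
  gdom :: "'m \<Rightarrow> 'o"
  gcod :: "'m \<Rightarrow> 'o"
  gcomp :: "'m \<Rightarrow> 'm \<Rightarrow> 'm"
  gid :: "'o \<Rightarrow> 'm"

definition is_finite_groupoid :: "('o, 'm) groupoid \<Rightarrow> bool" where
  "is_finite_groupoid C \<longleftrightarrow>
     finite (gobj C) \<and> finite (gmor C) \<and> gobj C \<noteq> {} \<and>
     (\<forall>g\<in>gmor C. gdom C g \<in> gobj C \<and> gcod C g \<in> gobj C) \<and>
     (\<forall>A\<in>gobj C. gid C A \<in> gmor C \<and> gdom C (gid C A) = A \<and> gcod C (gid C A) = A) \<and>
     (\<forall>g\<in>gmor C. \<forall>g'\<in>gmor C. gdom C g = gcod C g' \<longrightarrow>
        gcomp C g g' \<in> gmor C \<and> gdom C (gcomp C g g') = gdom C g' \<and>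
        gcod C (gcomp C g g') = gcod C g) \<and>
     (\<forall>f\<in>gmor C. \<forall>g\<in>gmor C. \<forall>h\<in>gmor C. gdom C f = gcod C g \<longrightarrow> gdom C g = gcod C h \<longrightarrow>
        gcomp C f (gcomp C g h) = gcomp C (gcomp C f g) h) \<and>
     (\<forall>g\<in>gmor C. gcomp C (gid C (gcod C g)) g = g \<and> gcomp C g (gid C (gdom C g)) = g) \<and>
     (\<forall>g\<in>gmor C. \<exists>g'\<in>gmor C. gdom C g' = gcod C g \<and> gcod C g' = gdom C g \<and>
        gcomp C g g' = gid C (gcod C g) \<and> gcomp C g' g = gid C (gdom C g))"

definition ginv :: "('o, 'm) groupoid \<Rightarrow> 'm \<Rightarrow> 'm" where
  "ginv C g = (SOME g'. g' \<in> gmor C \<and> gdom C g' = gcod C g \<and> gcod C g' = gdom C g \<and>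
        gcomp C g g' = gid C (gcod C g) \<and> gcomp C g' g = gid C (gdom C g))"

definition wide_subgroupoid :: "('o, 'm) groupoid \<Rightarrow> 'm set \<Rightarrow> bool" where
  "wide_subgroupoid C H \<longleftrightarrow> H \<subseteq> gmor C \<and>
     (\<forall>A\<in>gobj C. gid C A \<in> H) \<and>
     (\<forall>h\<in>H. \<forall>h'\<in>H. gdom C h = gcod C h' \<longrightarrow> gcomp C h h' \<in> H) \<and>
     (\<forall>h\<in>H. ginv C h \<in> H)"

definition connected_wide :: "('o, 'm) groupoid \<Rightarrow> 'm set \<Rightarrow> bool" where
  "connected_wide C H \<longleftrightarrow> (\<forall>A\<in>gobj C. \<forall>B\<in>gobj C. \<exists>h\<in>H. gdom C h = A \<and> gcod C h = B)"

text \<open>Double-coset functions C_{H\G/K}; functions are taken to be 0 off the morphisms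
  (so that they are exactly functions on G_1).\<close>
definition double_coset_fns :: "('o, 'm) groupoid \<Rightarrow> 'm set \<Rightarrow> 'm set \<Rightarrow> ('m \<Rightarrow> complex) set" where
  "double_coset_fns C H K = {\<phi>. (\<forall>m. m \<notin> gmor C \<longrightarrow> \<phi> m = 0) \<and>
     (\<forall>h\<in>H. \<forall>g\<in>gmor C. \<forall>k\<in>K. gcod C h = gcod C g \<longrightarrow> gdom C g = gcod C k \<longrightarrow>
        \<phi> (gcomp C (ginv C h) (gcomp C g k)) = \<phi> g)}"

definition Yobj :: "('o, 'm) groupoid \<Rightarrow> 'm set \<Rightarrow> 'o \<Rightarrow> ('m \<Rightarrow> complex) set" where
  "Yobj C H G = {f. (\<forall>x. \<not> (x \<in> gmor C \<and> gcod C x = G) \<longrightarrow> f x = 0) \<and>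
     (\<forall>g\<in>gmor C. \<forall>h\<in>H. gcod C g = G \<longrightarrow> gdom C g = gcod C h \<longrightarrow> f (gcomp C g h) = f g)}"

definition Ymor :: "('o, 'm) groupoid \<Rightarrow> 'm \<Rightarrow> ('m \<Rightarrow> complex) \<Rightarrow> ('m \<Rightarrow> complex)" where
  "Ymor C g f = (\<lambda>x. if x \<in> gmor C \<and> gcod C x = gcod C g then f (gcomp C (ginv C g) x) else 0)"

text \<open>For a unique representation the
  family is 0 at non-objects and each component is 0 outside Y_H(G).\<close>
definition nat_trans :: "('o, 'm) groupoid \<Rightarrow> 'm set \<Rightarrow> 'm set \<Rightarrow>
    ('o \<Rightarrow> ('m \<Rightarrow> complex) \<Rightarrow> ('m \<Rightarrow> complex)) set" where
  "nat_trans C H K = {\<eta>.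
     (\<forall>G. G \<notin> gobj C \<longrightarrow> (\<forall>f. \<eta> G f = (\<lambda>m. 0))) \<and>
     (\<forall>G\<in>gobj C. (\<forall>f. f \<notin> Yobj C H G \<longrightarrow> \<eta> G f = (\<lambda>m. 0)) \<and>
        (\<forall>f\<in>Yobj C H G. \<eta> G f \<in> Yobj C K G) \<and>
        (\<forall>a. \<forall>f1\<in>Yobj C H G. \<forall>f2\<in>Yobj C H G.
            \<eta> G (\<lambda>m. a * f1 m + f2 m) = (\<lambda>m. a * \<eta> G f1 m + \<eta> G f2 m))) \<and>
     (\<forall>g\<in>gmor C. \<forall>f\<in>Yobj C H (gdom C g).
        \<eta> (gcod C g) (Ymor C g f) = Ymor C g (\<eta> (gdom C g) f))}"

end

theory Submission
  imports Defs
begin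

(* The isomorphism is convolution: a double coset function phi acts on Y_H(G) by
   (phi * f)(x) = sum of phi(y^-1 x) f(y) over all y with codomain G.  Right K-invariance of phi
   makes phi * f right K-invariant, and convolution commutes with the translations Y(g).
   Conversely, every f in Y_H(G) is a combination of the translates Y(y)(delta_A) of the
   indicators delta_A of H(-,A), so a natural transformation eta is determined by the values
   eta_A(delta_A).  Normalised by |H(-,A)|, these form an H-K double coset function (left
   H-invariance is naturality at the morphisms of H, which permute the deltas), and convolving
   with it gives back eta. *)

locale finite_groupoid =
  fixes C :: "('o, 'm) groupoid"
  assumes is_finite_groupoid: "is_finite_groupoid C"
begin

abbreviation comp :: "'m \<Rightarrow> 'm \<Rightarrow> 'm" (infixl "\<cdot>" 70)
  where "g \<cdot> h \<equiv> gcomp C g h"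

lemma finite_mor: "finite (gmor C)"
  using is_finite_groupoid by (simp add: is_finite_groupoid_def)

lemma dom_in_obj [simp]: "g \<in> gmor C \<Longrightarrow> gdom C g \<in> gobj C"
  and cod_in_obj [simp]: "g \<in> gmor C \<Longrightarrow> gcod C g \<in> gobj C"
  using is_finite_groupoid by (simp_all add: is_finite_groupoid_def)

lemma id_in_mor [simp]: "A \<in> gobj C \<Longrightarrow> gid C A \<in> gmor C"
  and dom_id [simp]: "A \<in> gobj C \<Longrightarrow> gdom C (gid C A) = A"
  and cod_id [simp]: "A \<in> gobj C \<Longrightarrow> gcod C (gid C A) = A"
  using is_finite_groupoid by (simp_all add: is_finite_groupoid_def)

lemma comp_in_mor [simp]:
    "g \<in> gmor C \<Longrightarrow> g' \<in> gmor C \<Longrightarrow> gdom C g = gcod C g' \<Longrightarrow> g \<cdot> g' \<in> gmor C"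
  and dom_comp [simp]:
    "g \<in> gmor C \<Longrightarrow> g' \<in> gmor C \<Longrightarrow> gdom C g = gcod C g' \<Longrightarrow> gdom C (g \<cdot> g') = gdom C g'"
  and cod_comp [simp]:
    "g \<in> gmor C \<Longrightarrow> g' \<in> gmor C \<Longrightarrow> gdom C g = gcod C g' \<Longrightarrow> gcod C (g \<cdot> g') = gcod C g"
  using is_finite_groupoid by (simp_all add: is_finite_groupoid_def)

lemma comp_assoc:
  "f \<in> gmor C \<Longrightarrow> g \<in> gmor C \<Longrightarrow> h \<in> gmor C \<Longrightarrow> gdom C f = gcod C g \<Longrightarrow> gdom C g = gcod C h \<Longrightarrow>
    f \<cdot> (g \<cdot> h) = f \<cdot> g \<cdot> h"
  using is_finite_groupoid unfolding is_finite_groupoid_def by blast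

lemma comp_id_left [simp]: "g \<in> gmor C \<Longrightarrow> gcod C g = A \<Longrightarrow> gid C A \<cdot> g = g"
  and comp_id_right [simp]: "g \<in> gmor C \<Longrightarrow> gdom C g = A \<Longrightarrow> g \<cdot> gid C A = g"
  using is_finite_groupoid by (auto simp add: is_finite_groupoid_def)

lemma ginv_spec:
  assumes "g \<in> gmor C"
  shows "ginv C g \<in> gmor C \<and> gdom C (ginv C g) = gcod C g \<and> gcod C (ginv C g) = gdom C g \<and>
    g \<cdot> ginv C g = gid C (gcod C g) \<and> ginv C g \<cdot> g = gid C (gdom C g)"
proof -
  from is_finite_groupoid assms obtain g' where "g' \<in> gmor C \<and> gdom C g' = gcod C g \<and>
      gcod C g' = gdom C g \<and> g \<cdot> g' = gid C (gcod C g) \<and> g' \<cdot> g = gid C (gdom C g)"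
    unfolding is_finite_groupoid_def by blast
  then show ?thesis
    unfolding ginv_def by (rule someI)
qed

lemma ginv_in_mor [simp]: "g \<in> gmor C \<Longrightarrow> ginv C g \<in> gmor C"
  and dom_ginv [simp]: "g \<in> gmor C \<Longrightarrow> gdom C (ginv C g) = gcod C g"
  and cod_ginv [simp]: "g \<in> gmor C \<Longrightarrow> gcod C (ginv C g) = gdom C g"
  and comp_ginv [simp]: "g \<in> gmor C \<Longrightarrow> g \<cdot> ginv C g = gid C (gcod C g)"
  and ginv_comp [simp]: "g \<in> gmor C \<Longrightarrow> ginv C g \<cdot> g = gid C (gdom C g)"
  using ginv_spec by simp_all

lemma comp_ginv_cancel [simp]:
  "y \<in> gmor C \<Longrightarrow> z \<in> gmor C \<Longrightarrow> gcod C z = gcod C y \<Longrightarrow> y \<cdot> (ginv C y \<cdot> z) = z"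
  by (simp add: comp_assoc)

lemma ginv_comp_cancel [simp]:
  "y \<in> gmor C \<Longrightarrow> z \<in> gmor C \<Longrightarrow> gdom C y = gcod C z \<Longrightarrow> ginv C y \<cdot> (y \<cdot> z) = z"
  by (simp add: comp_assoc)

lemma comp_comp_ginv_cancel [simp]:
  "g \<in> gmor C \<Longrightarrow> h \<in> gmor C \<Longrightarrow> gdom C g = gcod C h \<Longrightarrow> g \<cdot> h \<cdot> ginv C h = g"
  by (simp flip: comp_assoc)

lemma ginv_unique:
  assumes "g \<in> gmor C" "g' \<in> gmor C" "gdom C g' = gcod C g" "gcod C g' = gdom C g"
    and "g \<cdot> g' = gid C (gcod C g)"
  shows "g' = ginv C g"
proof -
  have "g' = ginv C g \<cdot> (g \<cdot> g')"
    using assms(1-4) by simp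
  also have "\<dots> = ginv C g"
    using assms by simp
  finally show ?thesis .
qed

lemma ginv_ginv [simp]: "g \<in> gmor C \<Longrightarrow> ginv C (ginv C g) = g"
  by (rule ginv_unique[symmetric]) simp_all

lemma ginv_of_comp:
  assumes "g \<in> gmor C" "h \<in> gmor C" "gdom C g = gcod C h"
  shows "ginv C (g \<cdot> h) = ginv C h \<cdot> ginv C g"
proof (rule ginv_unique[symmetric])
  have "g \<cdot> h \<cdot> (ginv C h \<cdot> ginv C g) = g \<cdot> (h \<cdot> (ginv C h \<cdot> ginv C g))"
    using assms by (simp add: comp_assoc)
  then show "g \<cdot> h \<cdot> (ginv C h \<cdot> ginv C g) = gid C (gcod C (g \<cdot> h))"
    using assms by simp
qed (use assms in simp_all)

lemma ginv_id [simp]: "A \<in> gobj C \<Longrightarrow> ginv C (gid C A) = gid C A"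
  by (rule ginv_unique[symmetric]) simp_all

definition mor_to :: "'o \<Rightarrow> 'm set"
  where "mor_to A = {g \<in> gmor C. gcod C g = A}"

lemma mem_mor_to [simp]: "g \<in> mor_to A \<longleftrightarrow> g \<in> gmor C \<and> gcod C g = A"
  by (simp add: mor_to_def)

lemma finite_mor_to [simp]: "finite (mor_to A)"
  using finite_mor by (simp add: mor_to_def)

lemma inj_on_comp_mor_to:
  assumes "g \<in> gmor C"
  shows "inj_on (\<lambda>y. g \<cdot> y) (mor_to (gdom C g))"
proof (rule inj_onI)
  fix y z assume y: "y \<in> mor_to (gdom C g)" and z: "z \<in> mor_to (gdom C g)"
    and eq: "g \<cdot> y = g \<cdot> z"
  have "y = ginv C g \<cdot> (g \<cdot> y)"
    using assms y by simp
  also have "\<dots> = ginv C g \<cdot> (g \<cdot> z)"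
    by (simp only: eq)
  also have "\<dots> = z"
    using assms z by simp
  finally show "y = z" .
qed

lemma image_comp_mor_to:
  assumes "g \<in> gmor C"
  shows "(\<lambda>y. g \<cdot> y) ` mor_to (gdom C g) = mor_to (gcod C g)"
proof (intro equalityI subsetI)
  fix y assume "y \<in> mor_to (gcod C g)"
  then have "ginv C g \<cdot> y \<in> mor_to (gdom C g)" "y = g \<cdot> (ginv C g \<cdot> y)"
    using assms by simp_all
  then show "y \<in> (\<lambda>y. g \<cdot> y) ` mor_to (gdom C g)"
    by blast
qed (use assms in auto)

lemma wide_subgroupoidD:
  assumes "wide_subgroupoid C H"
  shows wide_subgroupoid_mor: "h \<in> H \<Longrightarrow> h \<in> gmor C"
    and wide_subgroupoid_id: "A \<in> gobj C \<Longrightarrow> gid C A \<in> H"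
    and wide_subgroupoid_comp: "h \<in> H \<Longrightarrow> h' \<in> H \<Longrightarrow> gdom C h = gcod C h' \<Longrightarrow> h \<cdot> h' \<in> H"
    and wide_subgroupoid_ginv: "h \<in> H \<Longrightarrow> ginv C h \<in> H"
  using assms unfolding wide_subgroupoid_def by auto

lemma wide_subgroupoid_comp_right_iff:
  assumes "wide_subgroupoid C H" "h \<in> H" "g \<in> gmor C" "gdom C g = gcod C h"
  shows "g \<cdot> h \<in> H \<longleftrightarrow> g \<in> H"
proof
  have "h \<in> gmor C"
    using assms wide_subgroupoid_mor by blast
  moreover assume "g \<cdot> h \<in> H"
  ultimately show "g \<in> H"
    using wide_subgroupoid_comp[OF assms(1) \<open>g \<cdot> h \<in> H\<close> wide_subgroupoid_ginv[OF assms(1,2)]] assms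
    by simp
qed (use assms in \<open>simp add: wide_subgroupoid_comp\<close>)

lemma wide_subgroupoid_ginv_comp_iff:
  assumes "wide_subgroupoid C H" "h \<in> H" "g \<in> gmor C" "gcod C g = gcod C h"
  shows "ginv C h \<cdot> g \<in> H \<longleftrightarrow> g \<in> H"
proof
  have "h \<in> gmor C"
    using assms wide_subgroupoid_mor by blast
  moreover assume "ginv C h \<cdot> g \<in> H"
  ultimately show "g \<in> H"
    using wide_subgroupoid_comp[OF assms(1,2) \<open>ginv C h \<cdot> g \<in> H\<close>] assms by simp
qed (use assms in \<open>simp add: wide_subgroupoid_comp wide_subgroupoid_ginv wide_subgroupoid_mor\<close>)

lemma wide_subgroupoid_ginv_iff:
  assumes "wide_subgroupoid C H" "g \<in> gmor C"
  shows "ginv C g \<in> H \<longleftrightarrow> g \<in> H"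
  using assms wide_subgroupoid_ginv ginv_ginv by metis

lemma ginv_comp_mem_wide_subgroupoid_swap:
  assumes "wide_subgroupoid C H" "y \<in> gmor C" "g \<in> gmor C" "gcod C y = gcod C g"
  shows "ginv C y \<cdot> g \<in> H \<longleftrightarrow> ginv C g \<cdot> y \<in> H"
proof -
  have "ginv C (ginv C y \<cdot> g) = ginv C g \<cdot> y"
    using assms by (simp add: ginv_of_comp)
  then show ?thesis
    using assms wide_subgroupoid_ginv_iff[of H "ginv C y \<cdot> g"] by simp
qed

lemma image_comp_wide_subgroupoid:
  assumes "wide_subgroupoid C H" "g \<in> gmor C"
  shows "(\<lambda>h. g \<cdot> h) ` (H \<inter> mor_to (gdom C g)) = {y \<in> mor_to (gcod C g). ginv C g \<cdot> y \<in> H}"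
proof (intro equalityI subsetI)
  fix y assume "y \<in> (\<lambda>h. g \<cdot> h) ` (H \<inter> mor_to (gdom C g))"
  then obtain h where "h \<in> H" "h \<in> mor_to (gdom C g)" "y = g \<cdot> h"
    by blast
  then show "y \<in> {y \<in> mor_to (gcod C g). ginv C g \<cdot> y \<in> H}"
    using assms by simp
next
  fix y assume "y \<in> {y \<in> mor_to (gcod C g). ginv C g \<cdot> y \<in> H}"
  then have "ginv C g \<cdot> y \<in> H \<inter> mor_to (gdom C g)" "y = g \<cdot> (ginv C g \<cdot> y)"
    using assms by simp_all
  then show "y \<in> (\<lambda>h. g \<cdot> h) ` (H \<inter> mor_to (gdom C g))"
    by blast
qed

lemma card_wide_subgroupoid_mor_to:
  assumes "wide_subgroupoid C H" "h \<in> H"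
  shows "card (H \<inter> mor_to (gcod C h)) = card (H \<inter> mor_to (gdom C h))"
proof -
  have h: "h \<in> gmor C"
    using assms wide_subgroupoid_mor by blast
  have "H \<inter> mor_to (gcod C h) = {y \<in> mor_to (gcod C h). ginv C h \<cdot> y \<in> H}"
    using assms h wide_subgroupoid_mor wide_subgroupoid_ginv_comp_iff by fastforce
  also have "\<dots> = (\<lambda>y. h \<cdot> y) ` (H \<inter> mor_to (gdom C h))"
    using image_comp_wide_subgroupoid[OF assms(1) h] by simp
  finally show ?thesis
    using card_image[OF inj_on_subset[OF inj_on_comp_mor_to[OF h]], of "H \<inter> mor_to (gdom C h)"]
    by simp
qed

lemma card_wide_subgroupoid_mor_to_pos:
  assumes "wide_subgroupoid C H" "A \<in> gobj C"
  shows "card (H \<inter> mor_to A) > 0"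
proof -
  have "gid C A \<in> H \<inter> mor_to A"
    using assms wide_subgroupoid_id by simp
  then show ?thesis
    by (auto simp: card_gt_0_iff)
qed

lemma Yobj_vanishes: "f \<in> Yobj C H G \<Longrightarrow> x \<notin> mor_to G \<Longrightarrow> f x = 0"
  and Yobj_right_invariant:
    "f \<in> Yobj C H G \<Longrightarrow> g \<in> mor_to G \<Longrightarrow> h \<in> H \<Longrightarrow> gdom C g = gcod C h \<Longrightarrow> f (g \<cdot> h) = f g"
  unfolding Yobj_def by auto

lemma Yobj_zero: "(\<lambda>m. 0) \<in> Yobj C H G"
  unfolding Yobj_def by simp

lemma Yobj_lincomb: "f1 \<in> Yobj C H G \<Longrightarrow> f2 \<in> Yobj C H G \<Longrightarrow> (\<lambda>m. a * f1 m + f2 m) \<in> Yobj C H G"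
  unfolding Yobj_def by simp

lemma Yobj_sum: "(\<And>y. y \<in> S \<Longrightarrow> e y \<in> Yobj C H G) \<Longrightarrow> (\<lambda>m. \<Sum>y\<in>S. c y * e y m) \<in> Yobj C H G"
  unfolding Yobj_def by simp

lemma Ymor_in_Yobj:
  assumes "wide_subgroupoid C H" "g \<in> gmor C" "f \<in> Yobj C H (gdom C g)"
  shows "Ymor C g f \<in> Yobj C H (gcod C g)"
  unfolding Yobj_def
proof (intro CollectI conjI allI ballI impI)
  fix x assume "\<not> (x \<in> gmor C \<and> gcod C x = gcod C g)"
  then show "Ymor C g f x = 0"
    by (auto simp: Ymor_def)
next
  fix x h assume x: "x \<in> gmor C" "gcod C x = gcod C g" and h: "h \<in> H" "gdom C x = gcod C h"
  have "h \<in> gmor C"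
    using assms(1) h wide_subgroupoid_mor by blast
  then have "f (ginv C g \<cdot> (x \<cdot> h)) = f (ginv C g \<cdot> x)"
    using assms x h by (simp add: comp_assoc Yobj_right_invariant)
  then show "Ymor C g f (x \<cdot> h) = Ymor C g f x"
    using x h \<open>h \<in> gmor C\<close> by (simp add: Ymor_def)
qed

definition coset_delta :: "'m set \<Rightarrow> 'o \<Rightarrow> 'm \<Rightarrow> complex"
  where "coset_delta H A m = of_bool (m \<in> H \<inter> mor_to A)"

lemma coset_delta_in_Yobj:
  assumes "wide_subgroupoid C H"
  shows "coset_delta H A \<in> Yobj C H A"
  using assms wide_subgroupoid_comp_right_iff
  unfolding Yobj_def coset_delta_def by (auto simp: wide_subgroupoid_mor)

lemma Ymor_coset_delta_apply:
  assumes "y \<in> gmor C"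
  shows "Ymor C y (coset_delta H (gdom C y)) m = of_bool (m \<in> mor_to (gcod C y) \<and> ginv C y \<cdot> m \<in> H)"
  using assms by (auto simp: Ymor_def coset_delta_def)

lemma Ymor_coset_delta:
  assumes "wide_subgroupoid C H" "h \<in> H"
  shows "Ymor C h (coset_delta H (gdom C h)) = coset_delta H (gcod C h)"
proof
  fix m
  have "h \<in> gmor C"
    using assms wide_subgroupoid_mor by blast
  then show "Ymor C h (coset_delta H (gdom C h)) m = coset_delta H (gcod C h) m"
    using assms wide_subgroupoid_ginv_comp_iff
    by (auto simp: Ymor_coset_delta_apply coset_delta_def)
qed

lemma sum_Ymor_coset_delta:
  assumes "wide_subgroupoid C H" "m \<in> gmor C"
  shows "(\<Sum>y\<in>mor_to (gcod C m). F y * Ymor C y (coset_delta H (gdom C y)) m) =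
    (\<Sum>h\<in>H \<inter> mor_to (gdom C m). F (m \<cdot> h))"
proof -
  have coset: "mor_to (gcod C m) \<inter> {y. ginv C y \<cdot> m \<in> H} = (\<lambda>h. m \<cdot> h) ` (H \<inter> mor_to (gdom C m))"
    using image_comp_wide_subgroupoid[OF assms] ginv_comp_mem_wide_subgroupoid_swap[OF assms(1) _ assms(2)]
    by auto
  have "(\<Sum>y\<in>mor_to (gcod C m). F y * Ymor C y (coset_delta H (gdom C y)) m) =
      (\<Sum>y\<in>mor_to (gcod C m). F y * of_bool (ginv C y \<cdot> m \<in> H))"
    using assms(2) by (intro sum.cong) (auto simp: Ymor_coset_delta_apply)
  also have "\<dots> = sum F ((\<lambda>h. m \<cdot> h) ` (H \<inter> mor_to (gdom C m)))"
    by (simp add: coset)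
  also have "\<dots> = (\<Sum>h\<in>H \<inter> mor_to (gdom C m). F (m \<cdot> h))"
    by (rule sum.reindex[OF inj_on_subset[OF inj_on_comp_mor_to[OF assms(2)]], unfolded comp_def]) auto
  finally show ?thesis .
qed

lemma Yobj_eq_sum_translates:
  assumes "wide_subgroupoid C H" "f \<in> Yobj C H G"
  shows "f = (\<lambda>m. \<Sum>y\<in>mor_to G.
    f y / card (H \<inter> mor_to (gdom C y)) * Ymor C y (coset_delta H (gdom C y)) m)"
proof
  fix m
  let ?c = "\<lambda>y. of_nat (card (H \<inter> mor_to (gdom C y))) :: complex"
  show "f m = (\<Sum>y\<in>mor_to G. f y / ?c y * Ymor C y (coset_delta H (gdom C y)) m)"
  proof (cases "m \<in> mor_to G")
    case False
    moreover have "Ymor C y (coset_delta H (gdom C y)) m = 0" if "y \<in> mor_to G" for y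
      using that False by (auto simp: Ymor_coset_delta_apply)
    ultimately show ?thesis
      using assms(2) by (simp add: Yobj_vanishes)
  next
    case True
    then have m: "m \<in> gmor C" "gcod C m = G"
      by simp_all
    have "(\<Sum>y\<in>mor_to G. f y / ?c y * Ymor C y (coset_delta H (gdom C y)) m) =
        (\<Sum>h\<in>H \<inter> mor_to (gdom C m). f (m \<cdot> h) / ?c (m \<cdot> h))"
      unfolding m(2)[symmetric] by (rule sum_Ymor_coset_delta[OF assms(1) m(1)])
    also have "\<dots> = (\<Sum>h\<in>H \<inter> mor_to (gdom C m). f m / ?c m)"
    proof (rule sum.cong)
      fix h assume "h \<in> H \<inter> mor_to (gdom C m)"
      then show "f (m \<cdot> h) / ?c (m \<cdot> h) = f m / ?c m"
        using m assms Yobj_right_invariant card_wide_subgroupoid_mor_to[OF assms(1), of h]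
        by (simp add: wide_subgroupoid_mor)
    qed simp
    also have "\<dots> = f m"
      using card_wide_subgroupoid_mor_to_pos[OF assms(1) dom_in_obj[OF m(1)]] by auto
    finally show ?thesis ..
  qed
qed

lemma nat_transD:
  assumes "\<eta> \<in> nat_trans C H K"
  shows nat_trans_outside_obj: "G \<notin> gobj C \<Longrightarrow> \<eta> G f = (\<lambda>m. 0)"
    and nat_trans_outside_Yobj: "G \<in> gobj C \<Longrightarrow> f \<notin> Yobj C H G \<Longrightarrow> \<eta> G f = (\<lambda>m. 0)"
    and nat_trans_in_Yobj: "G \<in> gobj C \<Longrightarrow> f \<in> Yobj C H G \<Longrightarrow> \<eta> G f \<in> Yobj C K G"
    and nat_trans_lincomb: "G \<in> gobj C \<Longrightarrow> f1 \<in> Yobj C H G \<Longrightarrow> f2 \<in> Yobj C H G \<Longrightarrow>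
      \<eta> G (\<lambda>m. a * f1 m + f2 m) = (\<lambda>m. a * \<eta> G f1 m + \<eta> G f2 m)"
    and nat_trans_natural: "g \<in> gmor C \<Longrightarrow> f \<in> Yobj C H (gdom C g) \<Longrightarrow>
      \<eta> (gcod C g) (Ymor C g f) = Ymor C g (\<eta> (gdom C g) f)"
  using assms unfolding nat_trans_def by blast+

lemma nat_trans_zero:
  assumes "\<eta> \<in> nat_trans C H K" "G \<in> gobj C"
  shows "\<eta> G (\<lambda>m. 0) = (\<lambda>m. 0)"
proof -
  have "\<eta> G (\<lambda>m. 1 * 0 + 0) = (\<lambda>m. 1 * \<eta> G (\<lambda>m. 0) m + \<eta> G (\<lambda>m. 0) m)"
    using nat_trans_lincomb[OF assms Yobj_zero Yobj_zero] .
  then show ?thesis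
    by (simp add: fun_eq_iff)
qed

lemma nat_trans_sum:
  assumes "\<eta> \<in> nat_trans C H K" "G \<in> gobj C" "finite S" "\<And>y. y \<in> S \<Longrightarrow> e y \<in> Yobj C H G"
  shows "\<eta> G (\<lambda>m. \<Sum>y\<in>S. c y * e y m) = (\<lambda>m. \<Sum>y\<in>S. c y * \<eta> G (e y) m)"
  using assms(3,4)
proof (induction S rule: finite_induct)
  case empty
  then show ?case
    using nat_trans_zero[OF assms(1,2)] by simp
next
  case (insert x S)
  then have "\<eta> G (\<lambda>m. c x * e x m + (\<Sum>y\<in>S. c y * e y m)) =
      (\<lambda>m. c x * \<eta> G (e x) m + \<eta> G (\<lambda>m. \<Sum>y\<in>S. c y * e y m) m)"
    by (simp add: nat_trans_lincomb[OF assms(1,2)] Yobj_sum)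
  with insert show ?case
    by simp
qed

end

locale two_wide_subgroupoids = finite_groupoid C for C :: "('o, 'm) groupoid" +
  fixes H K :: "'m set"
  assumes wide_H: "wide_subgroupoid C H"
    and wide_K: "wide_subgroupoid C K"
begin

lemma double_coset_fnD:
  assumes "\<phi> \<in> double_coset_fns C H K"
  shows double_coset_fn_vanishes: "m \<notin> gmor C \<Longrightarrow> \<phi> m = 0"
    and double_coset_fn_invariant: "h \<in> H \<Longrightarrow> g \<in> gmor C \<Longrightarrow> k \<in> K \<Longrightarrow>
      gcod C h = gcod C g \<Longrightarrow> gdom C g = gcod C k \<Longrightarrow> \<phi> (ginv C h \<cdot> (g \<cdot> k)) = \<phi> g"
  using assms unfolding double_coset_fns_def by blast+

lemma double_coset_fn_right_invariant:
  assumes "\<phi> \<in> double_coset_fns C H K" "g \<in> gmor C" "k \<in> K" "gdom C g = gcod C k"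
  shows "\<phi> (g \<cdot> k) = \<phi> g"
proof -
  have "k \<in> gmor C"
    using assms wide_K wide_subgroupoid_mor by blast
  then show ?thesis
    using double_coset_fn_invariant[OF assms(1) wide_subgroupoid_id[OF wide_H] assms(2,3)] assms
    by simp
qed

lemma double_coset_fn_left_invariant:
  assumes "\<phi> \<in> double_coset_fns C H K" "h \<in> H" "g \<in> gmor C" "gcod C h = gcod C g"
  shows "\<phi> (ginv C h \<cdot> g) = \<phi> g"
  using double_coset_fn_invariant[OF assms(1-3) wide_subgroupoid_id[OF wide_K dom_in_obj[OF assms(3)]]] assms
  by simp

text \<open>The guard produces the normal form that \<^const>\<open>nat_trans\<close> requires of its members.\<close>
definition convolution :: "('m \<Rightarrow> complex) \<Rightarrow> 'o \<Rightarrow> ('m \<Rightarrow> complex) \<Rightarrow> 'm \<Rightarrow> complex"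
  where "convolution \<phi> G f x =
    (if G \<in> gobj C \<and> f \<in> Yobj C H G \<and> x \<in> mor_to G
     then \<Sum>y\<in>mor_to G. \<phi> (ginv C y \<cdot> x) * f y else 0)"

text \<open>Convolution with \<^const>\<open>coset_delta\<close> multiplies a double coset function by
  \<open>|H(-,A)|\<close>, whence the normalisation.\<close>
definition trans_kernel :: "('o \<Rightarrow> ('m \<Rightarrow> complex) \<Rightarrow> 'm \<Rightarrow> complex) \<Rightarrow> 'm \<Rightarrow> complex"
  where "trans_kernel \<eta> g =
    (if g \<in> gmor C
     then \<eta> (gcod C g) (coset_delta H (gcod C g)) g / card (H \<inter> mor_to (gcod C g)) else 0)"

lemma convolution_lincomb:
  "convolution (\<lambda>m. a * \<phi> m + \<psi> m) = (\<lambda>G f m. a * convolution \<phi> G f m + convolution \<psi> G f m)"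
  by (intro ext) (simp add: convolution_def distrib_right sum.distrib sum_distrib_left mult.assoc)

lemma convolution_in_Yobj:
  assumes "\<phi> \<in> double_coset_fns C H K" "G \<in> gobj C" "f \<in> Yobj C H G"
  shows "convolution \<phi> G f \<in> Yobj C K G"
  unfolding Yobj_def
proof (intro CollectI conjI allI ballI impI)
  fix x assume "\<not> (x \<in> gmor C \<and> gcod C x = G)"
  then show "convolution \<phi> G f x = 0"
    by (auto simp: convolution_def)
next
  fix g k assume g: "g \<in> gmor C" "gcod C g = G" and k: "k \<in> K" "gdom C g = gcod C k"
  have "k \<in> gmor C"
    using k wide_K wide_subgroupoid_mor by blast
  have "\<phi> (ginv C y \<cdot> (g \<cdot> k)) = \<phi> (ginv C y \<cdot> g)" if "y \<in> mor_to G" for y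
    using that g k \<open>k \<in> gmor C\<close>
    by (simp add: comp_assoc double_coset_fn_right_invariant[OF assms(1)])
  then show "convolution \<phi> G f (g \<cdot> k) = convolution \<phi> G f g"
    using g k \<open>k \<in> gmor C\<close> assms by (simp add: convolution_def)
qed

lemma convolution_natural:
  assumes "g \<in> gmor C" "f \<in> Yobj C H (gdom C g)"
  shows "convolution \<phi> (gcod C g) (Ymor C g f) = Ymor C g (convolution \<phi> (gdom C g) f)"
proof
  fix x
  show "convolution \<phi> (gcod C g) (Ymor C g f) x = Ymor C g (convolution \<phi> (gdom C g) f) x"
  proof (cases "x \<in> mor_to (gcod C g)")
    case False
    then show ?thesis
      by (auto simp: convolution_def Ymor_def)
  next
    case True
    have "(\<Sum>y\<in>mor_to (gcod C g). \<phi> (ginv C y \<cdot> x) * Ymor C g f y)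
        = (\<Sum>z\<in>mor_to (gdom C g). \<phi> (ginv C (g \<cdot> z) \<cdot> x) * Ymor C g f (g \<cdot> z))"
      unfolding image_comp_mor_to[OF assms(1), symmetric]
      by (rule sum.reindex[OF inj_on_comp_mor_to[OF assms(1)], unfolded comp_def])
    also have "\<dots> = (\<Sum>z\<in>mor_to (gdom C g). \<phi> (ginv C z \<cdot> (ginv C g \<cdot> x)) * f z)"
      using assms True by (intro sum.cong) (auto simp: Ymor_def ginv_of_comp comp_assoc)
    finally show ?thesis
      using assms True Ymor_in_Yobj[OF wide_H assms] by (simp add: convolution_def Ymor_def)
  qed
qed

lemma convolution_in_nat_trans:
  assumes "\<phi> \<in> double_coset_fns C H K"
  shows "convolution \<phi> \<in> nat_trans C H K"
proof -
  have "convolution \<phi> G f = (\<lambda>m. 0)" if "G \<notin> gobj C \<or> f \<notin> Yobj C H G" for G f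
    using that by (auto simp: convolution_def)
  moreover have "convolution \<phi> G (\<lambda>m. a * f1 m + f2 m) =
      (\<lambda>m. a * convolution \<phi> G f1 m + convolution \<phi> G f2 m)"
    if "f1 \<in> Yobj C H G" "f2 \<in> Yobj C H G" for G a f1 f2
    using that Yobj_lincomb[OF that]
    by (auto simp: convolution_def sum.distrib sum_distrib_left algebra_simps)
  ultimately show ?thesis
    unfolding nat_trans_def using convolution_in_Yobj[OF assms] convolution_natural by blast
qed

lemma trans_kernel_convolution:
  assumes "\<phi> \<in> double_coset_fns C H K"
  shows "trans_kernel (convolution \<phi>) = \<phi>"
proof
  fix g
  show "trans_kernel (convolution \<phi>) g = \<phi> g"
  proof (cases "g \<in> gmor C")
    case False
    then show ?thesis
      by (simp add: trans_kernel_def double_coset_fn_vanishes[OF assms])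
  next
    case True
    define A where "A = gcod C g"
    have "convolution \<phi> A (coset_delta H A) g = (\<Sum>y\<in>mor_to A. \<phi> (ginv C y \<cdot> g) * coset_delta H A y)"
      using True coset_delta_in_Yobj[OF wide_H] by (simp add: convolution_def A_def)
    also have "\<dots> = (\<Sum>y\<in>H \<inter> mor_to A. \<phi> (ginv C y \<cdot> g))"
      by (simp add: coset_delta_def Int_commute)
    also have "\<dots> = (\<Sum>y\<in>H \<inter> mor_to A. \<phi> g)"
      using True by (intro sum.cong) (auto simp: A_def double_coset_fn_left_invariant[OF assms])
    finally show ?thesis
      using True card_wide_subgroupoid_mor_to_pos[OF wide_H, of A]
      by (simp add: trans_kernel_def A_def card_gt_0_iff)
  qed
qed

lemma nat_trans_coset_delta_translate:
  assumes "\<eta> \<in> nat_trans C H K" "y \<in> gmor C" "x \<in> mor_to (gcod C y)"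
  shows "\<eta> (gcod C y) (Ymor C y (coset_delta H (gdom C y))) x =
    \<eta> (gdom C y) (coset_delta H (gdom C y)) (ginv C y \<cdot> x)"
  using nat_trans_natural[OF assms(1,2) coset_delta_in_Yobj[OF wide_H]] assms(3)
  by (simp add: Ymor_def)

lemma trans_kernel_in_double_coset_fns:
  assumes "\<eta> \<in> nat_trans C H K"
  shows "trans_kernel \<eta> \<in> double_coset_fns C H K"
  unfolding double_coset_fns_def
proof (intro CollectI conjI allI ballI impI)
  fix m assume "m \<notin> gmor C"
  then show "trans_kernel \<eta> m = 0"
    by (simp add: trans_kernel_def)
next
  fix h g k assume h: "h \<in> H" "gcod C h = gcod C g" and g: "g \<in> gmor C"
    and k: "k \<in> K" "gdom C g = gcod C k"
  have "h \<in> gmor C" "k \<in> gmor C"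
    using h k wide_H wide_K wide_subgroupoid_mor by blast+
  let ?\<delta> = "coset_delta H"
  have "\<eta> (gdom C h) (?\<delta> (gdom C h)) (ginv C h \<cdot> (g \<cdot> k)) =
      \<eta> (gcod C h) (Ymor C h (?\<delta> (gdom C h))) (g \<cdot> k)"
    using nat_trans_coset_delta_translate[OF assms \<open>h \<in> gmor C\<close>] h g k \<open>k \<in> gmor C\<close> by simp
  also have "\<dots> = \<eta> (gcod C g) (?\<delta> (gcod C g)) (g \<cdot> k)"
    using Ymor_coset_delta[OF wide_H h(1)] h by simp
  also have "\<dots> = \<eta> (gcod C g) (?\<delta> (gcod C g)) g"
    using Yobj_right_invariant[OF nat_trans_in_Yobj[OF assms _ coset_delta_in_Yobj[OF wide_H]]] g k
    by simp
  finally show "trans_kernel \<eta> (ginv C h \<cdot> (g \<cdot> k)) = trans_kernel \<eta> g"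
    using card_wide_subgroupoid_mor_to[OF wide_H h(1)] h g k \<open>h \<in> gmor C\<close> \<open>k \<in> gmor C\<close>
    by (simp add: trans_kernel_def)
qed

lemma nat_trans_eq_sum_translates:
  assumes "\<eta> \<in> nat_trans C H K" "G \<in> gobj C" "f \<in> Yobj C H G"
  shows "\<eta> G f = (\<lambda>m. \<Sum>y\<in>mor_to G.
    f y / card (H \<inter> mor_to (gdom C y)) * \<eta> G (Ymor C y (coset_delta H (gdom C y))) m)"
proof -
  have translates: "Ymor C y (coset_delta H (gdom C y)) \<in> Yobj C H G" if "y \<in> mor_to G" for y
    using that Ymor_in_Yobj[OF wide_H _ coset_delta_in_Yobj[OF wide_H]] by force
  have "\<eta> G f = \<eta> G (\<lambda>m. \<Sum>y\<in>mor_to G.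
      f y / card (H \<inter> mor_to (gdom C y)) * Ymor C y (coset_delta H (gdom C y)) m)"
    using Yobj_eq_sum_translates[OF wide_H assms(3)] by (rule arg_cong)
  also have "\<dots> = (\<lambda>m. \<Sum>y\<in>mor_to G.
      f y / card (H \<inter> mor_to (gdom C y)) * \<eta> G (Ymor C y (coset_delta H (gdom C y))) m)"
    using nat_trans_sum[OF assms(1,2) finite_mor_to translates] .
  finally show ?thesis .
qed

lemma convolution_trans_kernel:
  assumes "\<eta> \<in> nat_trans C H K"
  shows "convolution (trans_kernel \<eta>) = \<eta>"
proof (intro ext)
  fix G f x
  show "convolution (trans_kernel \<eta>) G f x = \<eta> G f x"
  proof (cases "G \<in> gobj C \<and> f \<in> Yobj C H G \<and> x \<in> mor_to G")
    case False
    then consider "G \<notin> gobj C" | "G \<in> gobj C" "f \<notin> Yobj C H G" | "G \<in> gobj C" "f \<in> Yobj C H G" "x \<notin> mor_to G"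
      by blast
    then show ?thesis
      by cases (auto simp: convolution_def nat_trans_outside_obj[OF assms]
          nat_trans_outside_Yobj[OF assms] Yobj_vanishes[OF nat_trans_in_Yobj[OF assms]])
  next
    case True
    then have G: "G \<in> gobj C" and f: "f \<in> Yobj C H G" and x: "x \<in> mor_to G"
      by simp_all
    let ?c = "\<lambda>y. of_nat (card (H \<inter> mor_to (gdom C y))) :: complex"
    let ?e = "\<lambda>y. Ymor C y (coset_delta H (gdom C y))"
    have "f y / ?c y * \<eta> G (?e y) x = trans_kernel \<eta> (ginv C y \<cdot> x) * f y" if "y \<in> mor_to G" for y
      using that x nat_trans_coset_delta_translate[OF assms, of y x] by (simp add: trans_kernel_def)
    then have "(\<Sum>y\<in>mor_to G. f y / ?c y * \<eta> G (?e y) x) = convolution (trans_kernel \<eta>) G f x"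
      using G f x by (simp add: convolution_def)
    then show ?thesis
      by (subst nat_trans_eq_sum_translates[OF assms G f]) simp
  qed
qed

lemma bij_betw_convolution: "bij_betw convolution (double_coset_fns C H K) (nat_trans C H K)"
  using trans_kernel_convolution convolution_trans_kernel convolution_in_nat_trans trans_kernel_in_double_coset_fns
  by (intro bij_betw_byWitness[where f' = trans_kernel]) auto

end

theorem theorem5p4:
  fixes C :: "('o, 'm) groupoid" and H K :: "'m set"
  assumes "is_finite_groupoid C"
    and "wide_subgroupoid C H" and "connected_wide C H"
    and "wide_subgroupoid C K" and "connected_wide C K"
  shows "\<exists>\<Phi>. bij_betw \<Phi> (double_coset_fns C H K) (nat_trans C H K) \<and>
    (\<forall>a. \<forall>x\<in>double_coset_fns C H K. \<forall>y\<in>double_coset_fns C H K.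
       \<Phi> (\<lambda>m. a * x m + y m) = (\<lambda>G f m. a * \<Phi> x G f m + \<Phi> y G f m))"
proof -
  interpret two_wide_subgroupoids C H K
    using assms by unfold_locales
  show ?thesis
    using bij_betw_convolution convolution_lincomb by blast
qed

end
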